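(* Regard the vertex set of $\Upsilon_{[\mathcal Q^\flat]}$ as $\overline I^{\mathrm{tw},\flat}_\xi$. The quiver of $\widetilde B^{[\mathcal Q^\flat]}$ is obtained from $\Upsilon_{[\mathcal Q^\flat]}$ by the following four operations: - (B1) adding the arrows $(i,r)\to(i,r-2r_i)$ whenever $(i,r),(i,r-2r_i)\in\overline I^{\mathrm{tw},\flat}_\xi$; - (B2) removing all arrows of the form $(n,r)\to(n-1,r+1)$; - (B3) adding the arrows $(n,r)\to(n-1,r+3)$ whenever $(n,r)\in\overline I^{\mathrm{tw},\flat}_\xi$ and $(n-1,r+3)\in(\overline I^{\mathrm{tw},\flat}_\xi)_e$; - (B4) removing the arrows between vertices in $(\overline I^{\mathrm{tw},\flat}_\xi)_f$. More explicitly, the arrow set of the quiver of $\widetilde B^{[\mathcal Q^\flat]}$ is the union of: 1. $\{(i,r)\to(i,r-2r_i)\mid (i,r),(i,r-2r_i)\in\overline I^{\mathrm{tw},\flat}_\xi\}$; 2. $\{(i,r)\to(j,r+2)\mid i,j\le n-1,\ |i-j|=1,\ (i,r)\in\overline I^{\mathrm{tw},\flat}_\xi,\ (j,r+2)\in(\overline I^{\mathrm{tw},\flat}_\xi)_e\}$; 3. $\{(n-1,r)\to(n,r+1)\mid (n-1,r)\in\overline I^{\mathrm{tw},\flat}_\xi,\ (n,r+1)\in(\overline I^{\mathrm{tw},\flat}_\xi)_e\}$; 4. $\{(n,r)\to(n-1,r+3)\mid (n,r)\in\overline I^{\mathrm{tw},\flat}_\xi,\ (n-1,r+3)\in(\overline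 I^{\mathrm{tw},\flat}_\xi)_e\}$.
   Context: Fix $n\ge2$, and put $r_i=2$ for $1\le i\le n-1$ and $r_n=1$. Twisted AR quiver. $\mathcal Q$ is a quiver with underlying graph of type $\mathrm A_{2n-2}$, and $\xi$ a height function ($\xi(j)=\xi(i)+1$ for arrows $i\to j$). Let $\widehat I_\xi=\{(i,p):1\le i\le2n-2,\ p\equiv\xi(i)\ \mathrm{mod}\ 2,\ \xi(2n-1-i)-(2n-1)<p\le\xi(i)\}$, the vertex set of the AR quiver $\Gamma_{\mathcal Q}$, whose arrows are $(j,p-1)\to(i,p)$ for $|i-j|=1$ with both ends in $\widehat I_\xi$. Let $\phi(i,p)=(i,p)$ for $i\le n-1$ and $(i+1,p)$ for $i\ge n$. For $\flat\in\{>,<\}$, $\Upsilon_{[\mathcal Q^\flat]}$ has vertex set $\widehat I^{\mathrm{tw},\flat}_\xi$ consisting of: - $\phi(\widehat I_\xi)$; - a vertex $(n,p-\frac12)$ for each arrow $(j,p-1)\to(i,p)$ of $\Gamma_{\mathcal Q}$ with $\{i,j\}=\{n-1,n\}$; - one extra vertex $(n,r_M+\frac12)$ ($\flat={>}$) or $(n,r_m-\frac12)$ ($\flat={<}$), where $r_M$, $r_m$ are the max and min of $\{p:(n-1,p)\text{ or }(n,p)\in\widehat I_\xi\}$. Its arrows are: - $\phi(j,p-1)\to\phi(i,p)$ for arrows of $\Gamma_{\mathcal Q}$ with $\{i,j\}\ne\{n-1,n\}$; - $\phi(j,p-1)\to(n,p-\frac12)\to\phi(i,p)$ for arrows with $\{i,j\}=\{n-1,n\}$;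 - for $\flat={>}$, $v_M\to(n,r_M+\frac12)$, and for $\flat={<}$, $(n,r_m-\frac12)\to v_m$, where $v_M$ ($v_m$) is the vertex of $\phi(\widehat I_\xi)$ with first coordinate in $\{n-1,n+1\}$ and second coordinate $r_M$ ($r_m$). Vertices are relabelled by $(\imath,s)\mapsto(\imath,2s)$ ($\imath\le n$), $(2n-\imath,2s)$ ($\imath>n$), with image $\overline I^{\mathrm{tw},\flat}_\xi$. The residue of a vertex $(\imath,s)$ is $\imath$. Exchange matrix. Listing the residues of the vertices by decreasing second coordinate $s$ gives a reduced word $(\imath_1,\dots,\imath_\ell)$ of the longest element of $W(\mathrm A_{2n-1})$; positions $k$ are identified with vertices. For a position $k$, $k^+$ is the next position $>k$ with the same letter, or $\ell+1$ if none. Let $J_f=\{k:k^+=\ell+1\}$ and $J_e$ its complement; $(\overline I^{\mathrm{tw},\flat}_\xi)_e$ and $(\overline I^{\mathrm{tw},\flat}_\xi)_f$ are the corresponding vertex subsets. Let $(a_{\imath\jmath})$ be the type $\mathrm A_{2n-1}$ Cartan matrix. $\widetilde B^{[\mathcal Q^\flat]}=(b_{st})_{s\in J,t\in J_e}$ has entries: - $b_{st}=1$ if $t=s^+$; - $b_{st}=a_{\imath_s\imath_t}$ if $s<t<s^+<t^+$; - $b_{st}=-1$ if $t^+=s$; - $b_{st}=-a_{\imath_s\imath_t}$ if $t<s<t^+<s^+$; - $b_{st}=0$ otherwise. Its quiver has vertex set $J$ and an arrow $\beta\to\beta'$ whenever $b_{\beta\beta'}=1$ or $b_{\beta'\beta}=-1$.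 *)

theory Defs
  imports Main
begin

(* A vertex (i,s) of the twisted AR quiver
   Upsilon, with s a half-integer, is encoded as (i, 2*s) :: int * int, so that the
   relabelling (i,s) |-> (i,2s) / (2n-i,2s) only acts on the first coordinate. *)

datatype flat = Gt | Lt

definition Ihat :: "int \<Rightarrow> (int \<Rightarrow> int) \<Rightarrow> (int \<times> int) set" where
  "Ihat n \<xi> = {(i,p). 1 \<le> i \<and> i \<le> 2*n-2 \<and> p mod 2 = \<xi> i mod 2 \<and>
                 \<xi> (2*n-1-i) - (2*n-1) < p \<and> p \<le> \<xi> i}"

definition Gamma_arrows :: "int \<Rightarrow> (int \<Rightarrow> int) \<Rightarrow> ((int \<times> int) \<times> (int \<times> int)) set" where
  "Gamma_arrows n \<xi> = {((j,p-1),(i,p)) | i j p. \<bar>i-j\<bar> = 1 \<and>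
        (j,p-1) \<in> Ihat n \<xi> \<and> (i,p) \<in> Ihat n \<xi>}"

definition phiD :: "int \<Rightarrow> int \<times> int \<Rightarrow> int \<times> int" where
  "phiD n v = (if fst v \<le> n-1 then fst v else fst v + 1, 2 * snd v)"

definition rM :: "int \<Rightarrow> (int \<Rightarrow> int) \<Rightarrow> int" where
  "rM n \<xi> = Max {p. (n-1,p) \<in> Ihat n \<xi> \<or> (n,p) \<in> Ihat n \<xi>}"

definition rm :: "int \<Rightarrow> (int \<Rightarrow> int) \<Rightarrow> int" where
  "rm n \<xi> = Min {p. (n-1,p) \<in> Ihat n \<xi> \<or> (n,p) \<in> Ihat n \<xi>}"

definition UpsV :: "int \<Rightarrow> (int \<Rightarrow> int) \<Rightarrow> flat \<Rightarrow> (int \<times> int) set" where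
  "UpsV n \<xi> fl = phiD n ` Ihat n \<xi>
     \<union> {(n, 2*p-1) | i j p. ((j,p-1),(i,p)) \<in> Gamma_arrows n \<xi> \<and> {i,j} = {n-1,n}}
     \<union> {if fl = Gt then (n, 2 * rM n \<xi> + 1) else (n, 2 * rm n \<xi> - 1)}"

definition UpsA :: "int \<Rightarrow> (int \<Rightarrow> int) \<Rightarrow> flat \<Rightarrow> ((int \<times> int) \<times> (int \<times> int)) set" where
  "UpsA n \<xi> fl =
       {(phiD n (j,p-1), phiD n (i,p)) | i j p. ((j,p-1),(i,p)) \<in> Gamma_arrows n \<xi> \<and> {i,j} \<noteq> {n-1,n}}
     \<union> {(phiD n (j,p-1), (n, 2*p-1)) | i j p. ((j,p-1),(i,p)) \<in> Gamma_arrows n \<xi> \<and> {i,j} = {n-1,n}}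
     \<union> {((n, 2*p-1), phiD n (i,p)) | i j p. ((j,p-1),(i,p)) \<in> Gamma_arrows n \<xi> \<and> {i,j} = {n-1,n}}
     \<union> (if fl = Gt then
          {(v, (n, 2 * rM n \<xi> + 1)) | v. v \<in> phiD n ` Ihat n \<xi> \<and> fst v \<in> {n-1, n+1} \<and> snd v = 2 * rM n \<xi>}
        else
          {((n, 2 * rm n \<xi> - 1), v) | v. v \<in> phiD n ` Ihat n \<xi> \<and> fst v \<in> {n-1, n+1} \<and> snd v = 2 * rm n \<xi>})"

definition relabel :: "int \<Rightarrow> int \<times> int \<Rightarrow> int \<times> int" where
  "relabel n v = (if fst v \<le> n then fst v else 2*n - fst v, snd v)"

(* Word combinatorics; positions are 0-based: 0..<length vs, and "ell+1" becomes length vs.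
   The letter (residue) at position k is the first coordinate of vs!k. *)
definition nextpos :: "(int \<times> int) list \<Rightarrow> nat \<Rightarrow> nat" where
  "nextpos vs k = (if \<exists>k'. k < k' \<and> k' < length vs \<and> fst (vs!k') = fst (vs!k)
                   then LEAST k'. k < k' \<and> k' < length vs \<and> fst (vs!k') = fst (vs!k)
                   else length vs)"

definition Je :: "(int \<times> int) list \<Rightarrow> nat set" where
  "Je vs = {k. k < length vs \<and> nextpos vs k < length vs}"

definition Jf :: "(int \<times> int) list \<Rightarrow> nat set" where
  "Jf vs = {k. k < length vs \<and> nextpos vs k = length vs}"

definition cartanA :: "int \<Rightarrow> int \<Rightarrow> int" where
  "cartanA i j = (if i = j then 2 else if \<bar>i - j\<bar> = 1 then -1 else 0)"

definition bmat :: "(int \<times> int) list \<Rightarrow> nat \<Rightarrow> nat \<Rightarrow> int" where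
  "bmat vs s t =
     (let a = cartanA (fst (vs!s)) (fst (vs!t)) in
      if t = nextpos vs s then 1
      else if s < t \<and> t < nextpos vs s \<and> nextpos vs s < nextpos vs t then a
      else if nextpos vs t = s then -1
      else if t < s \<and> s < nextpos vs t \<and> nextpos vs t < nextpos vs s then - a
      else 0)"

(* quiver of B~ = (b_st)_{s in J, t in J_e} on vertex set J *)
definition Bquiver :: "(int \<times> int) list \<Rightarrow> (nat \<times> nat) set" where
  "Bquiver vs = {(\<beta>, \<beta>'). \<beta> < length vs \<and> \<beta>' < length vs \<and>
       ((\<beta>' \<in> Je vs \<and> bmat vs \<beta> \<beta>' = 1) \<or> (\<beta> \<in> Je vs \<and> bmat vs \<beta>' \<beta> = -1))}"

definition Bquiver_rel :: "int \<Rightarrow> (int \<times> int) list \<Rightarrow> ((int \<times> int) \<times> (int \<times> int)) set" where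
  "Bquiver_rel n vs = {(relabel n (vs!\<beta>), relabel n (vs!\<beta>')) | \<beta> \<beta>'. (\<beta>, \<beta>') \<in> Bquiver vs}"

definition Ibar :: "int \<Rightarrow> (int \<Rightarrow> int) \<Rightarrow> flat \<Rightarrow> (int \<times> int) set" where
  "Ibar n \<xi> fl = relabel n ` UpsV n \<xi> fl"

definition Ibar_e :: "int \<Rightarrow> (int \<times> int) list \<Rightarrow> (int \<times> int) set" where
  "Ibar_e n vs = {relabel n (vs!k) | k. k \<in> Je vs}"

definition Ibar_f :: "int \<Rightarrow> (int \<times> int) list \<Rightarrow> (int \<times> int) set" where
  "Ibar_f n vs = {relabel n (vs!k) | k. k \<in> Jf vs}"

definition rr :: "int \<Rightarrow> int \<Rightarrow> int" where
  "rr n i = (if i \<le> n - 1 then 2 else 1)"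

end

theory Submission
  imports Defs
begin

text \<open>The reduced word lists the vertices of \<open>\<Upsilon>\<close> by decreasing height, so a position
  \<open>k\<close> and its successor \<open>k\<^sup>+\<close> are consecutive vertices of one column, and the interlacing
  conditions defining \<open>B\<close> compare heights in adjacent columns. Each column of \<open>\<Upsilon>\<close> is an
  arithmetic progression (step 4 off the middle column \<open>n\<close>, step 2 on it, after doubling), and
  the parities of heights alternate from column to column, so the interlacing conditions collapse
  to four local arrow types. The relabelling folds column \<open>2n - i\<close> onto \<open>i\<close>; mirror columns
  carry heights of different parity classes, so the fold is injective on each height and on each
  column step. Comparing the four arrow types with the arrows of \<open>\<Upsilon>\<close>, which raise the height
  by one unit, gives (B1)--(B4); the only delicate points are the bottoms of the columns, where
  an arrow of \<open>\<Upsilon>\<close> joins two frozen vertices.\<close>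

lemma sorted_snd_desc_nth_less:
  fixes vs :: "('a \<times> 'b::linorder) list"
  assumes "sorted_wrt (\<lambda>u v. snd u \<ge> snd v) vs" "i < length vs" "j < length vs"
    and "snd (vs!j) < snd (vs!i)"
  shows "i < j"
proof (rule ccontr)
  assume "\<not> i < j"
  then have "snd (vs!i) \<le> snd (vs!j)"
    using sorted_wrt_nth_less[OF assms(1), of j i] assms(2) by (cases "i = j") auto
  then show False using assms(4) by simp
qed

lemma nextpos_bounds:
  assumes "k < length vs"
  shows "k < nextpos vs k \<and> nextpos vs k \<le> length vs"
proof (cases "\<exists>k'. k < k' \<and> k' < length vs \<and> fst (vs!k') = fst (vs!k)")
  case True
  then have "k < (LEAST k'. k < k' \<and> k' < length vs \<and> fst (vs!k') = fst (vs!k)) \<and>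
      (LEAST k'. k < k' \<and> k' < length vs \<and> fst (vs!k') = fst (vs!k)) < length vs"
    by (metis (mono_tags, lifting) LeastI_ex)
  with True show ?thesis unfolding nextpos_def by auto
qed (use assms in \<open>auto simp: nextpos_def\<close>)

lemma Bquiver_iff_nextpos:
  assumes "k < length vs" "k' < length vs"
  shows "(k, k') \<in> Bquiver vs \<longleftrightarrow> k' = nextpos vs k \<or>
    (\<bar>fst (vs!k) - fst (vs!k')\<bar> = 1 \<and> k' < k \<and> k < nextpos vs k' \<and> nextpos vs k' < nextpos vs k)"
  using assms nextpos_bounds[OF assms(1)] nextpos_bounds[OF assms(2)]
  unfolding Bquiver_def Je_def bmat_def cartanA_def Let_def
  by (auto simp: abs_minus_commute split: if_splits)

definition column_regular :: "(int \<Rightarrow> int) \<Rightarrow> (int \<times> int) set \<Rightarrow> bool" where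
  "column_regular d V \<longleftrightarrow> (\<forall>c. 0 < d c) \<and>
     (\<forall>c s s'. (c, s) \<in> V \<longrightarrow> (c, s') \<in> V \<longrightarrow> s' < s \<longrightarrow> s' \<le> s - d c \<and> (c, s - d c) \<in> V)"

text \<open>In vertex coordinates, \<open>(c, s) \<rightarrow> (c', s')\<close> is an arrow of the quiver of \<open>B\<close> when
  \<open>(c', s')\<close> is the next vertex below \<open>(c, s)\<close> in its column, or when the columns are adjacent
  and the column steps below the two vertices interlace.\<close>

definition exchange_arrow :: "(int \<Rightarrow> int) \<Rightarrow> (int \<times> int) set \<Rightarrow> int \<times> int \<Rightarrow> int \<times> int \<Rightarrow> bool" where
  "exchange_arrow d V u v \<longleftrightarrow> (case (u, v) of ((c, s), (c', s')) \<Rightarrow>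
     (c' = c \<and> s' = s - d c) \<or>
     (\<bar>c - c'\<bar> = 1 \<and> (c', s' - d c') \<in> V \<and> s < s' \<and> s' - d c' < s \<and>
      ((c, s - d c) \<notin> V \<or> s - d c < s' - d c')))"

locale regular_vertex_word =
  fixes vs :: "(int \<times> int) list" and d :: "int \<Rightarrow> int"
  assumes distinct: "distinct vs"
    and sorted: "sorted_wrt (\<lambda>u v. snd u \<ge> snd v) vs"
    and regular: "column_regular d (set vs)"
    and adjacent_heights_differ: "\<And>c c' s. (c, s) \<in> set vs \<Longrightarrow> (c', s) \<in> set vs \<Longrightarrow> \<bar>c - c'\<bar> \<noteq> 1"
begin

lemma step_pos: "0 < d c"
  using regular unfolding column_regular_def by blast

lemma column_step:
  "(c, s) \<in> set vs \<Longrightarrow> (c, s') \<in> set vs \<Longrightarrow> s' < s \<Longrightarrow> s' \<le> s - d c \<and> (c, s - d c) \<in> set vs"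
  using regular unfolding column_regular_def by blast

lemma same_column_nth_less:
  assumes "i < j" "j < length vs" "fst (vs!i) = fst (vs!j)"
  shows "snd (vs!j) < snd (vs!i)"
proof -
  have "snd (vs!j) \<le> snd (vs!i)" using assms sorted_wrt_nth_less[OF sorted] by auto
  moreover have "vs!i \<noteq> vs!j" using assms distinct nth_eq_iff_index_eq[of vs i j] by auto
  ultimately show ?thesis using assms(3) by (cases "vs!i"; cases "vs!j") auto
qed

lemma nextpos_step:
  assumes k: "k < length vs" "vs!k = (c, s)" and k1: "k1 < length vs" "vs!k1 = (c, s - d c)"
  shows "nextpos vs k = k1"
proof -
  let ?P = "\<lambda>k'. k < k' \<and> k' < length vs \<and> fst (vs!k') = fst (vs!k)"
  have "k < k1"
    using sorted_snd_desc_nth_less[OF sorted k(1) k1(1)] k k1 step_pos[of c] by auto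
  then have P: "?P k1" using k k1 by auto
  have "k1 \<le> k'" if "?P k'" for k'
  proof (rule ccontr)
    assume "\<not> k1 \<le> k'"
    obtain t where t: "vs!k' = (c, t)" using \<open>?P k'\<close> k by (cases "vs!k'") auto
    have "s - d c < t" using same_column_nth_less[of k' k1] \<open>\<not> k1 \<le> k'\<close> k1 t by auto
    moreover have "t < s" using same_column_nth_less[of k k'] that k t by auto
    moreover have "(c, t) \<in> set vs" "(c, s) \<in> set vs" using that t k by (metis nth_mem)+
    ultimately show False using column_step by fastforce
  qed
  then have "(LEAST k'. ?P k') = k1" using P by (intro Least_equality)
  then show ?thesis using P unfolding nextpos_def by auto
qed

lemma nextpos_no_step:
  assumes k: "k < length vs" "vs!k = (c, s)" and no_step: "(c, s - d c) \<notin> set vs"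
  shows "nextpos vs k = length vs"
proof -
  have "\<not> (k < k' \<and> k' < length vs \<and> fst (vs!k') = fst (vs!k))" for k'
  proof
    assume k': "k < k' \<and> k' < length vs \<and> fst (vs!k') = fst (vs!k)"
    then obtain t where t: "vs!k' = (c, t)" using k by (cases "vs!k'") auto
    have "t < s" using same_column_nth_less[of k k'] k' k t by auto
    moreover have "(c, t) \<in> set vs" "(c, s) \<in> set vs" using k k' t by (metis nth_mem)+
    ultimately show False using column_step no_step by blast
  qed
  then show ?thesis unfolding nextpos_def by auto
qed

lemma Je_iff_step:
  assumes "k < length vs" "vs!k = (c, s)"
  shows "k \<in> Je vs \<longleftrightarrow> (c, s - d c) \<in> set vs"
proof (cases "(c, s - d c) \<in> set vs")
  case True
  then obtain k1 where "k1 < length vs" "vs!k1 = (c, s - d c)" by (metis in_set_conv_nth)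
  then show ?thesis using True nextpos_step[OF assms] assms unfolding Je_def by auto
qed (use assms nextpos_no_step in \<open>auto simp: Je_def\<close>)

lemma adjacent_nth_less_iff:
  assumes a: "a < length vs" "vs!a = (c, t)" and b: "b < length vs" "vs!b = (c', u)"
    and adj: "\<bar>c - c'\<bar> = 1"
  shows "a < b \<longleftrightarrow> u < t"
proof -
  have "t \<noteq> u" using adjacent_heights_differ a b adj by (metis nth_mem)
  then show ?thesis
    using sorted_snd_desc_nth_less[OF sorted a(1) b(1)] sorted_snd_desc_nth_less[OF sorted b(1) a(1)] a b
    by (cases "u < t") auto
qed

lemma nextpos_interlace_iff:
  assumes k: "k < length vs" "vs!k = (c, s)" and k': "k' < length vs" "vs!k' = (c', s')"
    and adj: "\<bar>c - c'\<bar> = 1"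
  shows "(k' < k \<and> k < nextpos vs k' \<and> nextpos vs k' < nextpos vs k) \<longleftrightarrow>
    ((c', s' - d c') \<in> set vs \<and> s < s' \<and> s' - d c' < s \<and> ((c, s - d c) \<notin> set vs \<or> s - d c < s' - d c'))"
proof (cases "(c', s' - d c') \<in> set vs")
  case True
  then obtain k1' where k1': "k1' < length vs" "vs!k1' = (c', s' - d c')" by (metis in_set_conv_nth)
  note np' = nextpos_step[OF k' k1']
  have o1: "k' < k \<longleftrightarrow> s < s'" and o2: "k < k1' \<longleftrightarrow> s' - d c' < s"
    using adjacent_nth_less_iff[OF k' k] adjacent_nth_less_iff[OF k k1'] adj
    by (auto simp: abs_minus_commute)
  show ?thesis
  proof (cases "(c, s - d c) \<in> set vs")
    case True
    then obtain k1 where k1: "k1 < length vs" "vs!k1 = (c, s - d c)" by (metis in_set_conv_nth)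
    have "k1' < k1 \<longleftrightarrow> s - d c < s' - d c'"
      using adjacent_nth_less_iff[OF k1' k1] adj by (auto simp: abs_minus_commute)
    then show ?thesis using o1 o2 np' nextpos_step[OF k k1] True \<open>(c', s' - d c') \<in> set vs\<close> by auto
  next
    case False
    then show ?thesis using o1 o2 np' nextpos_no_step[OF k False] k1' True by auto
  qed
next
  case False
  then show ?thesis using nextpos_no_step[OF k' False] nextpos_bounds[OF k(1)] by auto
qed

lemma Bquiver_iff_exchange_arrow:
  assumes k: "k < length vs" "vs!k = (c, s)" and k': "k' < length vs" "vs!k' = (c', s')"
  shows "(k, k') \<in> Bquiver vs \<longleftrightarrow> exchange_arrow d (set vs) (c, s) (c', s')"
proof -
  have next_iff: "k' = nextpos vs k \<longleftrightarrow> c' = c \<and> s' = s - d c"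
  proof (cases "(c, s - d c) \<in> set vs")
    case True
    then obtain k1 where k1: "k1 < length vs" "vs!k1 = (c, s - d c)" by (metis in_set_conv_nth)
    then show ?thesis
      using nextpos_step[OF k k1] k' nth_eq_iff_index_eq[OF distinct k1(1) k'(1)] by auto
  next
    case False
    then show ?thesis using nextpos_no_step[OF k False] k' nth_mem[OF k'(1)] by auto
  qed
  show ?thesis
    unfolding Bquiver_iff_nextpos[OF k(1) k'(1)] next_iff exchange_arrow_def
    using nextpos_interlace_iff[OF k k'] k k' by auto
qed

lemma Bquiver_rel_exchange_arrows:
  "Bquiver_rel n vs = {(relabel n u, relabel n v) | u v.
     u \<in> set vs \<and> v \<in> set vs \<and> exchange_arrow d (set vs) u v}"
proof (intro set_eqI iffI)
  fix x assume "x \<in> Bquiver_rel n vs"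
  then obtain k k' where x: "x = (relabel n (vs!k), relabel n (vs!k'))" "(k, k') \<in> Bquiver vs"
    unfolding Bquiver_rel_def by blast
  then have k: "k < length vs" "k' < length vs" unfolding Bquiver_def by auto
  obtain c s c' s' where cs: "vs!k = (c, s)" "vs!k' = (c', s')" by (cases "vs!k", cases "vs!k'")
  then have "exchange_arrow d (set vs) (vs!k) (vs!k')"
    using Bquiver_iff_exchange_arrow[OF k(1) cs(1) k(2) cs(2)] x(2) by simp
  then show "x \<in> {(relabel n u, relabel n v) | u v. u \<in> set vs \<and> v \<in> set vs \<and> exchange_arrow d (set vs) u v}"
    using x(1) k by (blast intro: nth_mem)
next
  fix x assume "x \<in> {(relabel n u, relabel n v) | u v. u \<in> set vs \<and> v \<in> set vs \<and> exchange_arrow d (set vs) u v}"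
  then obtain u v where x: "x = (relabel n u, relabel n v)"
    "u \<in> set vs" "v \<in> set vs" "exchange_arrow d (set vs) u v" by blast
  obtain k k' where k: "k < length vs" "vs!k = u" "k' < length vs" "vs!k' = v"
    using x(2,3) by (metis in_set_conv_nth)
  then have "(k, k') \<in> Bquiver vs"
    using Bquiver_iff_exchange_arrow[of k "fst u" "snd u" k' "fst v" "snd v"] x(4) by simp
  then show "x \<in> Bquiver_rel n vs"
    using x(1) k unfolding Bquiver_rel_def by blast
qed

lemma Je_image_eq: "nth vs ` Je vs = {(c, s) \<in> set vs. (c, s - d c) \<in> set vs}"
proof (intro set_eqI iffI)
  fix v assume "v \<in> nth vs ` Je vs"
  then obtain k where "k \<in> Je vs" "v = vs!k" by blast
  moreover have "k < length vs" using \<open>k \<in> Je vs\<close> unfolding Je_def by simp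
  ultimately show "v \<in> {(c, s) \<in> set vs. (c, s - d c) \<in> set vs}"
    using Je_iff_step nth_mem by (cases v) fastforce
next
  fix v assume v: "v \<in> {(c, s) \<in> set vs. (c, s - d c) \<in> set vs}"
  then obtain k where "k < length vs" "vs!k = v" by (auto simp: in_set_conv_nth)
  then show "v \<in> nth vs ` Je vs" using v Je_iff_step by (cases v) force
qed

lemma Jf_image_eq: "nth vs ` Jf vs = {(c, s) \<in> set vs. (c, s - d c) \<notin> set vs}"
proof -
  have Jf_eq: "Jf vs = {0..<length vs} - Je vs"
    using nextpos_bounds unfolding Je_def Jf_def by fastforce
  have "inj_on (nth vs) {0..<length vs}"
    using distinct by (auto simp: inj_on_def nth_eq_iff_index_eq)
  then have "nth vs ` Jf vs = nth vs ` {0..<length vs} - nth vs ` Je vs"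
    unfolding Jf_eq by (rule inj_on_image_set_diff) (auto simp: Je_def)
  also have "\<dots> = set vs - {(c, s) \<in> set vs. (c, s - d c) \<in> set vs}"
    unfolding Je_image_eq using nth_image[of "length vs" vs] by simp
  finally show ?thesis by auto
qed

lemma Ibar_e_eq: "Ibar_e n vs = relabel n ` {(c, s) \<in> set vs. (c, s - d c) \<in> set vs}"
  unfolding Je_image_eq[symmetric] Ibar_e_def by blast

lemma Ibar_f_eq: "Ibar_f n vs = relabel n ` {(c, s) \<in> set vs. (c, s - d c) \<notin> set vs}"
  unfolding Jf_image_eq[symmetric] Ibar_f_def by blast

end

lemma parity_window_union:
  fixes a p m :: int
  shows "((even (p - a) \<and> a - 2*m < p \<and> p \<le> a) \<or> (odd (p - a) \<and> a - (2*m+1) < p \<and> p \<le> a + 1))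
     \<longleftrightarrow> a + 1 - 2*m \<le> p \<and> p \<le> a + 1"
  by presburger

lemma unit_distance_parity:
  fixes a b c :: int
  assumes "\<bar>a - b\<bar> = 1"
  shows "even (a - c) \<longleftrightarrow> odd (b - c)"
proof -
  have "a = b + 1 \<or> a = b - 1" using assms by linarith
  then show ?thesis by presburger
qed

lemma Gamma_arrows_iff:
  "((j, q), (i, p)) \<in> Gamma_arrows n \<xi> \<longleftrightarrow>
     q = p - 1 \<and> \<bar>i - j\<bar> = 1 \<and> (j, q) \<in> Ihat n \<xi> \<and> (i, p) \<in> Ihat n \<xi>"
  unfolding Gamma_arrows_def by auto

locale height_function_A =
  fixes n :: int and \<xi> :: "int \<Rightarrow> int"
  assumes two_le_n: "2 \<le> n"
    and height_step: "\<And>i. 1 \<le> i \<Longrightarrow> i < 2*n-2 \<Longrightarrow> \<bar>\<xi> (i+1) - \<xi> i\<bar> = 1"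
begin

lemma height_parity: "1 \<le> i \<Longrightarrow> i \<le> 2*n-2 \<Longrightarrow> even (\<xi> i - \<xi> 1) \<longleftrightarrow> odd i"
proof (induction i rule: int_ge_induct)
  case (step i)
  then have "\<bar>\<xi> (i+1) - \<xi> i\<bar> = 1" "even (\<xi> i - \<xi> 1) \<longleftrightarrow> odd i"
    using height_step by simp_all
  then show ?case using unit_distance_parity[of "\<xi> (i+1)" "\<xi> i" "\<xi> 1"] by simp
qed simp

lemma Ihat_iff:
  "(i, p) \<in> Ihat n \<xi> \<longleftrightarrow> 1 \<le> i \<and> i \<le> 2*n-2 \<and> even (p - \<xi> i) \<and>
     \<xi> (2*n-1-i) - (2*n-1) < p \<and> p \<le> \<xi> i"
  unfolding Ihat_def by (simp add: mod_eq_dvd_iff)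

lemma Ihat_column_step:
  assumes "(i, p) \<in> Ihat n \<xi>" "(i, p') \<in> Ihat n \<xi>" "p' < p"
  shows "p' \<le> p - 2 \<and> (i, p - 2) \<in> Ihat n \<xi>"
proof -
  have "even (p - p')" using assms(1,2) unfolding Ihat_iff by presburger
  then have "p' \<le> p - 2" using assms(3) by presburger
  with assms show ?thesis unfolding Ihat_iff by auto
qed

lemma Ihat_parity:
  assumes "(i, p) \<in> Ihat n \<xi>" "(j, q) \<in> Ihat n \<xi>"
  shows "even (p - q) \<longleftrightarrow> even (i - j)"
proof -
  have "even (\<xi> i - \<xi> 1) \<longleftrightarrow> odd i" "even (\<xi> j - \<xi> 1) \<longleftrightarrow> odd j"
    using assms height_parity unfolding Ihat_iff by auto
  with assms show ?thesis unfolding Ihat_iff by presburger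
qed

lemma height_adjacent:
  assumes "1 \<le> i" "i \<le> 2*n-2" "1 \<le> j" "j \<le> 2*n-2" "\<bar>i - j\<bar> = 1"
  shows "\<bar>\<xi> i - \<xi> j\<bar> = 1"
proof -
  consider "j = i + 1" | "i = j + 1" using assms(5) by linarith
  then show ?thesis using assms height_step[of i] height_step[of j] by cases auto
qed

lemma Ihat_bottom_adjacent:
  assumes "(i, p) \<in> Ihat n \<xi>" "(i, p - 2) \<notin> Ihat n \<xi>" "(j, p - 1) \<in> Ihat n \<xi>" "\<bar>i - j\<bar> = 1"
  shows "(j, p - 3) \<notin> Ihat n \<xi>"
proof
  assume "(j, p - 3) \<in> Ihat n \<xi>"
  moreover have "p - 2 \<le> \<xi> (2*n-1-i) - (2*n-1)" using assms(1,2) unfolding Ihat_iff by auto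
  moreover have "\<bar>\<xi> (2*n-1-i) - \<xi> (2*n-1-j)\<bar> = 1"
    using assms(1,3,4) height_adjacent[of "2*n-1-i" "2*n-1-j"] unfolding Ihat_iff by auto
  ultimately show False unfolding Ihat_iff by auto
qed

lemma central_Ihat_max_iff:
  "((n-1, p) \<in> Ihat n \<xi> \<or> (n, p) \<in> Ihat n \<xi>) \<longleftrightarrow>
     max (\<xi> (n-1)) (\<xi> n) - (2*n-2) \<le> p \<and> p \<le> max (\<xi> (n-1)) (\<xi> n)"
proof -
  have mirror: "2*n-1-(n-1) = n" "2*n-1-n = n-1" by simp_all
  have "\<bar>\<xi> n - \<xi> (n-1)\<bar> = 1" using height_step[of "n-1"] two_le_n by simp
  then consider "\<xi> n = \<xi> (n-1) + 1" | "\<xi> (n-1) = \<xi> n + 1" by linarith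
  then show ?thesis
  proof cases
    case 1
    have "even (p - (\<xi> (n-1) + 1)) \<longleftrightarrow> odd (p - \<xi> (n-1))" by presburger
    then show ?thesis
      using two_le_n parity_window_union[of p "\<xi> (n-1)" "n-1"]
      unfolding Ihat_iff mirror 1 by (simp add: algebra_simps)
  next
    case 2
    have "even (p - (\<xi> n + 1)) \<longleftrightarrow> odd (p - \<xi> n)" by presburger
    then have "((n, p) \<in> Ihat n \<xi> \<or> (n-1, p) \<in> Ihat n \<xi>) \<longleftrightarrow>
        max (\<xi> (n-1)) (\<xi> n) - (2*n-2) \<le> p \<and> p \<le> max (\<xi> (n-1)) (\<xi> n)"
      using two_le_n parity_window_union[of p "\<xi> n" "n-1"]
      unfolding Ihat_iff mirror 2 by (simp add: algebra_simps)
    then show ?thesis by blast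
  qed
qed

lemma central_heights_eq:
  "{p. (n-1, p) \<in> Ihat n \<xi> \<or> (n, p) \<in> Ihat n \<xi>} =
     {max (\<xi> (n-1)) (\<xi> n) - (2*n-2) .. max (\<xi> (n-1)) (\<xi> n)}"
  by (rule set_eqI) (simp only: mem_Collect_eq central_Ihat_max_iff atLeastAtMost_iff)

lemma rM_eq: "rM n \<xi> = max (\<xi> (n-1)) (\<xi> n)"
  unfolding rM_def central_heights_eq using two_le_n by (intro Max_eqI) auto

lemma rm_eq: "rm n \<xi> = rM n \<xi> - (2*n-2)"
  unfolding rm_def rM_eq central_heights_eq using two_le_n by (intro Min_eqI) auto

lemma rm_less_rM: "rm n \<xi> < rM n \<xi>"
  using rm_eq two_le_n by simp

lemma central_Ihat_iff:
  "((n-1, p) \<in> Ihat n \<xi> \<or> (n, p) \<in> Ihat n \<xi>) \<longleftrightarrow> rm n \<xi> \<le> p \<and> p \<le> rM n \<xi>"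
  unfolding rm_eq rM_eq by (rule central_Ihat_max_iff)

lemma central_Gamma_arrow_iff:
  "(\<exists>i j. ((j, p-1), (i, p)) \<in> Gamma_arrows n \<xi> \<and> {i, j} = {n-1, n}) \<longleftrightarrow>
     rm n \<xi> + 1 \<le> p \<and> p \<le> rM n \<xi>"
proof
  assume "\<exists>i j. ((j, p-1), (i, p)) \<in> Gamma_arrows n \<xi> \<and> {i, j} = {n-1, n}"
  then obtain i j where "(j, p-1) \<in> Ihat n \<xi>" "(i, p) \<in> Ihat n \<xi>" "i \<in> {n-1, n}" "j \<in> {n-1, n}"
    unfolding Gamma_arrows_iff by (metis insertI1 insert_commute)
  then show "rm n \<xi> + 1 \<le> p \<and> p \<le> rM n \<xi>"
    using central_Ihat_iff[of p] central_Ihat_iff[of "p-1"] by auto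
next
  assume "rm n \<xi> + 1 \<le> p \<and> p \<le> rM n \<xi>"
  then obtain i j where ij: "(i, p) \<in> Ihat n \<xi>" "(j, p-1) \<in> Ihat n \<xi>" "i \<in> {n-1, n}" "j \<in> {n-1, n}"
    using central_Ihat_iff[of p] central_Ihat_iff[of "p-1"] by auto
  have "i \<noteq> j" using Ihat_parity[OF ij(1,2)] by auto
  with ij(3,4) have "(i = n-1 \<and> j = n) \<or> (i = n \<and> j = n-1)" by auto
  then have "\<bar>i - j\<bar> = 1" "{i, j} = {n-1, n}" by auto
  with ij show "\<exists>i j. ((j, p-1), (i, p)) \<in> Gamma_arrows n \<xi> \<and> {i, j} = {n-1, n}"
    unfolding Gamma_arrows_iff by blast
qed

end

lemma odd_window_iff:
  fixes a b s :: int
  shows "(\<exists>p. s = 2*p - 1 \<and> a + 1 \<le> p \<and> p \<le> b) \<longleftrightarrow> odd s \<and> 2*a + 1 \<le> s \<and> s \<le> 2*b - 1"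
proof
  assume "odd s \<and> 2*a + 1 \<le> s \<and> s \<le> 2*b - 1"
  then obtain q where "s = 2*q + 1" "2*a + 1 \<le> s" "s \<le> 2*b - 1" by (auto elim: oddE)
  then show "\<exists>p. s = 2*p - 1 \<and> a + 1 \<le> p \<and> p \<le> b" by (intro exI[of _ "q+1"]) auto
qed auto

lemma mem_if_Gt:
  "x \<in> (if fl = Gt then X else Y) \<Longrightarrow> (fl = Gt \<and> x \<in> X) \<or> (fl = Lt \<and> x \<in> Y)"
  by (cases fl) auto

locale twisted_AR = height_function_A +
  fixes fl :: flat
begin

abbreviation V :: "(int \<times> int) set" where
  "V \<equiv> UpsV n \<xi> fl"

definition unphi :: "int \<Rightarrow> int" where
  "unphi c = (if c \<le> n-1 then c else c - 1)"

definition extra_shift :: int where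
  "extra_shift = (if fl = Gt then 1 else -1)"

lemma phiD_components: "fst (phiD n (i, p)) \<noteq> n \<and> unphi (fst (phiD n (i, p))) = i \<and> snd (phiD n (i, p)) = 2*p"
  unfolding phiD_def unphi_def by auto

lemma phiD_unphi: "c \<noteq> n \<Longrightarrow> phiD n (unphi c, p) = (c, 2*p)"
  unfolding phiD_def unphi_def by auto

lemma phiD_central_col: "i = n-1 \<or> i = n \<Longrightarrow> fst (phiD n (i, p)) = n-1 \<or> fst (phiD n (i, p)) = n+1"
  unfolding phiD_def by auto

lemma phiD_image_iff:
  "(c, s) \<in> phiD n ` Ihat n \<xi> \<longleftrightarrow> c \<noteq> n \<and> (\<exists>p. s = 2*p \<and> (unphi c, p) \<in> Ihat n \<xi>)"
proof
  assume "(c, s) \<in> phiD n ` Ihat n \<xi>"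
  then obtain i p where "(i, p) \<in> Ihat n \<xi>" "(c, s) = phiD n (i, p)" by auto
  then show "c \<noteq> n \<and> (\<exists>p. s = 2*p \<and> (unphi c, p) \<in> Ihat n \<xi>)"
    unfolding phiD_def unphi_def by (cases "i \<le> n-1") auto
next
  assume "c \<noteq> n \<and> (\<exists>p. s = 2*p \<and> (unphi c, p) \<in> Ihat n \<xi>)"
  then obtain p where "c \<noteq> n" "s = 2*p" "(unphi c, p) \<in> Ihat n \<xi>" by blast
  then show "(c, s) \<in> phiD n ` Ihat n \<xi>" using phiD_unphi by (metis image_eqI)
qed

lemma UpsV_off_centre_iff:
  "c \<noteq> n \<Longrightarrow> (c, s) \<in> V \<longleftrightarrow> (\<exists>p. s = 2*p \<and> (unphi c, p) \<in> Ihat n \<xi>)"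
  unfolding UpsV_def using phiD_image_iff by auto

lemma UpsV_even_iff: "c \<noteq> n \<Longrightarrow> (c, 2*p) \<in> V \<longleftrightarrow> (unphi c, p) \<in> Ihat n \<xi>"
  using UpsV_off_centre_iff by auto

lemma UpsV_off_centre_even: "c \<noteq> n \<Longrightarrow> (c, s) \<in> V \<Longrightarrow> \<exists>p. s = 2*p \<and> (unphi c, p) \<in> Ihat n \<xi>"
  using UpsV_off_centre_iff by blast

lemma phiD_in_UpsV: "(i, p) \<in> Ihat n \<xi> \<Longrightarrow> phiD n (i, p) \<in> V"
  using phiD_components[of i p] UpsV_even_iff by (metis prod.collapse)

lemma UpsV_centre_iff:
  "(n, s) \<in> V \<longleftrightarrow> odd s \<and> 2 * rm n \<xi> + extra_shift \<le> s \<and> s \<le> 2 * rM n \<xi> + extra_shift"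
proof -
  have "(n, s) \<in> {(n, 2*p-1) | i j p. ((j, p-1), (i, p)) \<in> Gamma_arrows n \<xi> \<and> {i, j} = {n-1, n}}
      \<longleftrightarrow> (\<exists>p. s = 2*p - 1 \<and> rm n \<xi> + 1 \<le> p \<and> p \<le> rM n \<xi>)"
    using central_Gamma_arrow_iff by blast
  then have "(n, s) \<in> V \<longleftrightarrow>
      (\<exists>p. s = 2*p - 1 \<and> rm n \<xi> + 1 \<le> p \<and> p \<le> rM n \<xi>) \<or>
      s = (if fl = Gt then 2 * rM n \<xi> + 1 else 2 * rm n \<xi> - 1)"
    unfolding UpsV_def using phiD_image_iff[of n s] by auto
  also have "\<dots> \<longleftrightarrow> odd s \<and> 2 * rm n \<xi> + extra_shift \<le> s \<and> s \<le> 2 * rM n \<xi> + extra_shift"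
    unfolding odd_window_iff extra_shift_def using rm_less_rM by (cases fl) (auto elim!: oddE)
  finally show ?thesis .
qed

lemma UpsV_column_range: "(c, s) \<in> V \<Longrightarrow> 1 \<le> c \<and> c \<le> 2*n - 1"
  using UpsV_off_centre_even[of c s] two_le_n unfolding Ihat_iff unphi_def
  by (cases "c = n") (auto split: if_splits)

definition col_step :: "int \<Rightarrow> int" where
  "col_step c = (if c = n then 2 else 4)"

lemma UpsV_column_regular: "column_regular col_step V"
proof -
  have "s' \<le> s - col_step c \<and> (c, s - col_step c) \<in> V"
    if in_V: "(c, s) \<in> V" "(c, s') \<in> V" and "s' < s" for c s s'
  proof (cases "c = n")
    case True
    then have "odd s" "odd s'" using in_V UpsV_centre_iff by auto
    then have "s' \<le> s - 2" using \<open>s' < s\<close> by presburger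
    with True in_V show ?thesis by (auto simp: col_step_def UpsV_centre_iff)
  next
    case False
    then obtain p p' where "s = 2*p" "s' = 2*p'" "(unphi c, p) \<in> Ihat n \<xi>" "(unphi c, p') \<in> Ihat n \<xi>"
      using in_V UpsV_off_centre_even by meson
    with \<open>s' < s\<close> False show ?thesis
      using Ihat_column_step[of "unphi c" p p'] UpsV_even_iff[of c "p - 2"] unfolding col_step_def
        by auto
  qed
  moreover have "0 < col_step c" for c by (simp add: col_step_def)
  ultimately show ?thesis unfolding column_regular_def by blast
qed

lemma UpsV_adjacent_heights_differ:
  assumes "(c, s) \<in> V" "(c', s) \<in> V"
  shows "\<bar>c - c'\<bar> \<noteq> 1"
proof
  assume adj: "\<bar>c - c'\<bar> = 1"
  show False
  proof (cases "c = n \<or> c' = n")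
    case True
    with adj have "(c = n \<and> c' \<noteq> n) \<or> (c \<noteq> n \<and> c' = n)" by auto
    then have "odd s \<and> even s"
      using assms UpsV_centre_iff UpsV_off_centre_even by fastforce
    then show ?thesis by simp
  next
    case False
    then obtain p q where "s = 2*p" "(unphi c, p) \<in> Ihat n \<xi>" "s = 2*q" "(unphi c', q) \<in> Ihat n \<xi>"
      using assms UpsV_off_centre_even by meson
    then have "(unphi c, p) \<in> Ihat n \<xi>" "(unphi c', p) \<in> Ihat n \<xi>" by auto
    moreover have "\<bar>unphi c - unphi c'\<bar> = 1" using False adj unfolding unphi_def by auto
    ultimately show False using Ihat_parity[of "unphi c" p "unphi c'" p] by presburger
  qed
qed

lemma centre_bottom:
  assumes "(n, s) \<in> V" "(n, s - 2) \<notin> V"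
  shows "s = 2 * rm n \<xi> + extra_shift"
proof -
  have "odd s" "2 * rm n \<xi> + extra_shift \<le> s" "s - 2 < 2 * rm n \<xi> + extra_shift"
    using assms by (auto simp: UpsV_centre_iff)
  moreover have "odd extra_shift" by (simp add: extra_shift_def)
  ultimately show ?thesis by presburger
qed

lemma side_column_lower_bound:
  assumes "c = n-1 \<or> c = n+1" "(c, s) \<in> V"
  shows "2 * rm n \<xi> \<le> s"
proof -
  have "c \<noteq> n" using assms(1) by auto
  then obtain p where "s = 2*p" "(unphi c, p) \<in> Ihat n \<xi>"
    using assms(2) UpsV_off_centre_even by blast
  moreover have "unphi c = n-1 \<or> unphi c = n" using assms(1) unfolding unphi_def by auto
  ultimately show ?thesis using central_Ihat_iff[of p] by auto
qed

definition B_arrow :: "int \<times> int \<Rightarrow> int \<times> int \<Rightarrow> bool" where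
  "B_arrow u v \<longleftrightarrow> (case (u, v) of ((c, s), (c', s')) \<Rightarrow>
     (c' = c \<and> s' = s - col_step c) \<or>
     (c \<noteq> n \<and> c' \<noteq> n \<and> \<bar>c - c'\<bar> = 1 \<and> s' = s + 2 \<and> (c', s - 2) \<in> V) \<or>
     (c \<noteq> n \<and> c' = n \<and> \<bar>c - c'\<bar> = 1 \<and> s' = s + 1 \<and> (n, s - 1) \<in> V) \<or>
     (c = n \<and> c' \<noteq> n \<and> \<bar>c - c'\<bar> = 1 \<and> s' = s + 3 \<and> (c', s - 1) \<in> V))"

lemma exchange_arrow_UpsV_iff:
  assumes u: "(c, s) \<in> V" and v: "(c', s') \<in> V"
  shows "exchange_arrow col_step V (c, s) (c', s') \<longleftrightarrow> B_arrow (c, s) (c', s')"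
proof (cases "\<bar>c - c'\<bar> = 1")
  case False
  then show ?thesis unfolding exchange_arrow_def B_arrow_def by auto
next
  case adj: True
  consider (off) "c \<noteq> n" "c' \<noteq> n" | (into_n) "c \<noteq> n" "c' = n" | (out_of_n) "c = n" "c' \<noteq> n"
    using adj by fastforce
  then show ?thesis
  proof cases
    case off
    then obtain p p' where "s = 2*p" "s' = 2*p'" using u v UpsV_off_centre_even by meson
    then have "s < s' \<and> s' - 4 < s \<longleftrightarrow> s' = s + 2" by presburger
    then show ?thesis using off adj unfolding exchange_arrow_def B_arrow_def col_step_def by auto
  next
    case into_n
    then obtain p where "s = 2*p" using u UpsV_off_centre_even by meson
    moreover have "odd s'" using v into_n UpsV_centre_iff by simp
    ultimately have "s < s' \<and> s' - 2 < s \<longleftrightarrow> s' = s + 1" by presburger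
    then show ?thesis using into_n adj unfolding exchange_arrow_def B_arrow_def col_step_def by auto
  next
    case out_of_n
    then obtain p' where "s' = 2*p'" using v UpsV_off_centre_even by meson
    moreover have "odd s" using u out_of_n UpsV_centre_iff by simp
    ultimately have "s < s' \<and> s' - 4 < s \<longleftrightarrow> s' = s + 1 \<or> s' = s + 3" by presburger
    moreover have "\<not> ((n, s - 2) \<notin> V \<and> (c', s - 3) \<in> V)"
    proof
      assume bottom: "(n, s - 2) \<notin> V \<and> (c', s - 3) \<in> V"
      have "c' = n-1 \<or> c' = n+1" using adj out_of_n by arith
      then have "2 * rm n \<xi> \<le> s - 3" using side_column_lower_bound bottom by blast
      moreover have "s = 2 * rm n \<xi> + extra_shift" using centre_bottom u out_of_n bottom by blast
      ultimately show False by (simp add: extra_shift_def split: if_splits)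
    qed
    ultimately show ?thesis using out_of_n adj unfolding exchange_arrow_def B_arrow_def col_step_def
      by auto
  qed
qed

lemma UpsA_cases:
  assumes "(a, b) \<in> UpsA n \<xi> fl"
  obtains (off_centre) i j p where "a = phiD n (j, p-1)" "b = phiD n (i, p)"
      "((j, p-1), (i, p)) \<in> Gamma_arrows n \<xi>" "{i, j} \<noteq> {n-1, n}"
    | (into_centre) i j p where "a = phiD n (j, p-1)" "b = (n, 2*p - 1)"
      "((j, p-1), (i, p)) \<in> Gamma_arrows n \<xi>" "{i, j} = {n-1, n}"
    | (out_of_centre) i j p where "a = (n, 2*p - 1)" "b = phiD n (i, p)"
      "((j, p-1), (i, p)) \<in> Gamma_arrows n \<xi>" "{i, j} = {n-1, n}"
    | (extra_Gt) "fl = Gt" "b = (n, 2 * rM n \<xi> + 1)" "a \<in> phiD n ` Ihat n \<xi>"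
      "fst a \<in> {n-1, n+1}" "snd a = 2 * rM n \<xi>"
    | (extra_Lt) "fl = Lt" "a = (n, 2 * rm n \<xi> - 1)" "fst b \<in> {n-1, n+1}" "snd b = 2 * rm n \<xi>"
  using assms unfolding UpsA_def by (elim UnE) (blast intro: that dest: mem_if_Gt)+

definition fold_col :: "int \<Rightarrow> int" where
  "fold_col c = (if c \<le> n then c else 2*n - c)"

lemma relabel_pair: "relabel n (c, s) = (fold_col c, s)"
  unfolding relabel_def fold_col_def by simp

lemma fold_col_centre [simp]: "fold_col n = n"
  unfolding fold_col_def by simp

lemma fold_col_eq_centre: "fold_col c = n \<longleftrightarrow> c = n"
  unfolding fold_col_def by auto

lemma fold_col_eq_side: "fold_col c = n - 1 \<longleftrightarrow> c = n - 1 \<or> c = n + 1"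
  unfolding fold_col_def by auto

lemma fold_col_adjacent:
  "c \<noteq> n \<Longrightarrow> c' \<noteq> n \<Longrightarrow> \<bar>c - c'\<bar> = 1 \<Longrightarrow>
     fold_col c \<le> n-1 \<and> fold_col c' \<le> n-1 \<and> \<bar>fold_col c - fold_col c'\<bar> = 1"
  unfolding fold_col_def by auto

lemma UpsV_off_centre_parity:
  assumes "c \<noteq> n" "c' \<noteq> n" "(c, 2*p) \<in> V" "(c', 2*q) \<in> V"
  shows "even (p - q) \<longleftrightarrow> even (unphi c - unphi c')"
  using assms UpsV_even_iff Ihat_parity by blast

lemma mirror_columns_parity:
  assumes "i < n" "(i, 2*p) \<in> V" "(2*n - i, 2*q) \<in> V"
  shows "odd (p - q)"
proof -
  have "unphi i = i" "unphi (2*n - i) = 2*n - 1 - i" using assms(1) unfolding unphi_def by auto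
  then show ?thesis using UpsV_off_centre_parity[of i "2*n - i" p q] assms by auto
qed

lemma fold_col_inj:
  assumes "(c, s) \<in> V" "(c', s') \<in> V" "fold_col c = fold_col c'" "4 dvd (s - s')"
  shows "c = c'"
proof (rule ccontr)
  assume "c \<noteq> c'"
  with assms(3) obtain i where i: "i < n" "(c = i \<and> c' = 2*n - i) \<or> (c' = i \<and> c = 2*n - i)"
    unfolding fold_col_def by (auto split: if_splits)
  then have "c \<noteq> n" "c' \<noteq> n" by auto
  then obtain p q where "s = 2*p" "s' = 2*q" using assms(1,2) UpsV_off_centre_even by meson
  moreover have "even (p - q)" using assms(4) \<open>s = 2*p\<close> \<open>s' = 2*q\<close> by presburger
  ultimately show False
    using i assms(1,2) mirror_columns_parity[of i p q] mirror_columns_parity[of i q p] by auto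
qed

lemma fold_col_adjacent_lift:
  assumes "c \<noteq> n" "c' \<noteq> n" "(c, 2*p) \<in> V" "(c', 2*p + 2) \<in> V" "\<bar>fold_col c - fold_col c'\<bar> = 1"
  shows "\<bar>c - c'\<bar> = 1"
proof -
  have "odd (unphi c - unphi c')"
    using UpsV_off_centre_parity[of c c' p "p+1"] assms(1-4) by (auto simp: algebra_simps)
  then show ?thesis using assms(1,2,5) unfolding fold_col_def unphi_def
    by (auto split: if_splits) presburger+
qed

lemma Ibar_iff: "(i, r) \<in> Ibar n \<xi> fl \<longleftrightarrow> (\<exists>c. (c, r) \<in> V \<and> fold_col c = i)"
  unfolding Ibar_def by (force simp: image_iff relabel_pair)

end

locale twisted_AR_word = twisted_AR +
  fixes vs :: "(int \<times> int) list"
  assumes vs_distinct: "distinct vs"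
    and vs_set: "set vs = UpsV n \<xi> fl"
    and vs_sorted: "sorted_wrt (\<lambda>u v. snd u \<ge> snd v) vs"

sublocale twisted_AR_word \<subseteq> regular_vertex_word vs col_step
  using vs_distinct vs_sorted UpsV_column_regular UpsV_adjacent_heights_differ
  by unfold_locales (auto simp: vs_set)

context twisted_AR_word
begin

lemma Ibar_e_iff:
  "(i, r) \<in> Ibar_e n vs \<longleftrightarrow> (\<exists>c. (c, r) \<in> V \<and> (c, r - col_step c) \<in> V \<and> fold_col c = i)"
  unfolding Ibar_e_eq vs_set by (force simp: image_iff relabel_pair)

lemma Ibar_f_iff:
  "(i, r) \<in> Ibar_f n vs \<longleftrightarrow> (\<exists>c. (c, r) \<in> V \<and> (c, r - col_step c) \<notin> V \<and> fold_col c = i)"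
  unfolding Ibar_f_eq vs_set by (force simp: image_iff relabel_pair)

lemma Ibar_e_not_f: "(i, r) \<in> Ibar_e n vs \<Longrightarrow> (i, r) \<notin> Ibar_f n vs"
  unfolding Ibar_e_iff Ibar_f_iff using fold_col_inj[where s = r and s' = r] by auto

lemma Bquiver_rel_B_arrow:
  "Bquiver_rel n vs = {((fold_col c, s), (fold_col c', s')) | c s c' s'.
     (c, s) \<in> V \<and> (c', s') \<in> V \<and> B_arrow (c, s) (c', s')}"
  unfolding Bquiver_rel_exchange_arrows vs_set
  using exchange_arrow_UpsV_iff by (force simp: relabel_pair)

definition same_residue_arrows :: "((int \<times> int) \<times> (int \<times> int)) set" where
  "same_residue_arrows = {((i, r), (i, r - 2 * rr n i)) | i r.
     (i, r) \<in> Ibar n \<xi> fl \<and> (i, r - 2 * rr n i) \<in> Ibar n \<xi> fl}"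

definition adjacent_residue_arrows :: "((int \<times> int) \<times> (int \<times> int)) set" where
  "adjacent_residue_arrows = {((i, r), (j, r + 2)) | i j r. i \<le> n-1 \<and> j \<le> n-1 \<and> \<bar>i - j\<bar> = 1 \<and>
     (i, r) \<in> Ibar n \<xi> fl \<and> (j, r + 2) \<in> Ibar_e n vs}"

definition arrows_into_n :: "((int \<times> int) \<times> (int \<times> int)) set" where
  "arrows_into_n = {((n-1, r), (n, r + 1)) | r. (n-1, r) \<in> Ibar n \<xi> fl \<and> (n, r + 1) \<in> Ibar_e n vs}"

definition arrows_out_of_n :: "((int \<times> int) \<times> (int \<times> int)) set" where
  "arrows_out_of_n = {((n, r), (n-1, r + 3)) | r. (n, r) \<in> Ibar n \<xi> fl \<and> (n-1, r + 3) \<in> Ibar_e n vs}"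

lemma col_step_fold_col: "(c, s) \<in> V \<Longrightarrow> col_step c = 2 * rr n (fold_col c)"
  using UpsV_column_range[of c s] unfolding col_step_def rr_def fold_col_def by auto

lemma B_arrow_in_Bquiver_rel:
  "(c, s) \<in> V \<Longrightarrow> (c', s') \<in> V \<Longrightarrow> B_arrow (c, s) (c', s') \<Longrightarrow>
     ((fold_col c, s), (fold_col c', s')) \<in> Bquiver_rel n vs"
  unfolding Bquiver_rel_B_arrow by blast

lemma B_arrow_folded_cases:
  assumes u: "(c, s) \<in> V" and v: "(c', s') \<in> V" and arrow: "B_arrow (c, s) (c', s')"
  shows "((fold_col c, s), (fold_col c', s')) \<in>
    same_residue_arrows \<union> adjacent_residue_arrows \<union> arrows_into_n \<union> arrows_out_of_n"
proof -
  consider (same) "c' = c" "s' = s - col_step c"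
    | (side) "c \<noteq> n" "c' \<noteq> n" "\<bar>c - c'\<bar> = 1" "s' = s + 2" "(c', s - 2) \<in> V"
    | (into_n) "c \<noteq> n" "c' = n" "\<bar>c - c'\<bar> = 1" "s' = s + 1" "(n, s - 1) \<in> V"
    | (out_of_n) "c = n" "c' \<noteq> n" "\<bar>c - c'\<bar> = 1" "s' = s + 3" "(c', s - 1) \<in> V"
    using arrow unfolding B_arrow_def by auto
  then show ?thesis
  proof cases
    case same
    then have "((fold_col c, s), (fold_col c', s')) \<in> same_residue_arrows"
      using u v col_step_fold_col[OF u] unfolding same_residue_arrows_def Ibar_iff by auto
    then show ?thesis by blast
  next
    case side
    have "(fold_col c', s') \<in> Ibar_e n vs"
      using v side unfolding Ibar_e_iff col_step_def by (intro exI[of _ c']) auto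
    then have "((fold_col c, s), (fold_col c', s')) \<in> adjacent_residue_arrows"
      using u side fold_col_adjacent unfolding adjacent_residue_arrows_def Ibar_iff by blast
    then show ?thesis by blast
  next
    case into_n
    then have "c = n-1 \<or> c = n+1" by arith
    then have "fold_col c = n-1" "fold_col c' = n"
      using into_n fold_col_eq_side fold_col_eq_centre by auto
    moreover have "(n, s') \<in> Ibar_e n vs"
      using v into_n unfolding Ibar_e_iff col_step_def
        by (intro exI[of _ n]) (auto simp: fold_col_eq_centre)
    ultimately have "((fold_col c, s), (fold_col c', s')) \<in> arrows_into_n"
      using u into_n unfolding arrows_into_n_def Ibar_iff by auto
    then show ?thesis by blast
  next
    case out_of_n
    then have "c' = n-1 \<or> c' = n+1" by arith
    then have "fold_col c = n" "fold_col c' = n-1"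
      using out_of_n fold_col_eq_side fold_col_eq_centre by auto
    moreover have "(n-1, s') \<in> Ibar_e n vs"
      using v out_of_n \<open>fold_col c' = n-1\<close> unfolding Ibar_e_iff col_step_def
        by (intro exI[of _ c']) auto
    ultimately have "((fold_col c, s), (fold_col c', s')) \<in> arrows_out_of_n"
      using u out_of_n unfolding arrows_out_of_n_def Ibar_iff by auto
    then show ?thesis by blast
  qed
qed

lemma same_residue_arrows_subset: "same_residue_arrows \<subseteq> Bquiver_rel n vs"
proof
  fix x assume "x \<in> same_residue_arrows"
  then obtain i r c c' where x: "x = ((i, r), (i, r - 2 * rr n i))"
    and c: "(c, r) \<in> V" "fold_col c = i" and c': "(c', r - 2 * rr n i) \<in> V" "fold_col c' = i"
    unfolding same_residue_arrows_def Ibar_iff by blast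
  have step: "col_step c = 2 * rr n i" using col_step_fold_col[OF c(1)] c(2) by simp
  have "c' = c"
  proof (cases "c = n")
    case True
    then have "fold_col c' = n" using c(2) c'(2) by simp
    then show ?thesis using True fold_col_eq_centre by blast
  next
    case False
    then have "4 dvd (r - 2 * rr n i - r)" using step unfolding col_step_def by auto
    then show ?thesis using fold_col_inj[OF c'(1) c(1)] c(2) c'(2) by simp
  qed
  then have "B_arrow (c, r) (c, r - 2 * rr n i)" using step unfolding B_arrow_def by simp
  then show "x \<in> Bquiver_rel n vs" using B_arrow_in_Bquiver_rel c c' x \<open>c' = c\<close> by fastforce
qed

lemma adjacent_residue_arrow_lift:
  assumes "(u, v) \<in> adjacent_residue_arrows"
  obtains c c' p where "u = (fold_col c, 2*p)" "v = (fold_col c', 2*p + 2)" "c \<noteq> n" "c' \<noteq> n"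
    "\<bar>c - c'\<bar> = 1" "(c, 2*p) \<in> V" "(c', 2*p + 2) \<in> V" "(c', 2*p - 2) \<in> V"
proof -
  obtain i j r c c' where ij: "u = (i, r)" "v = (j, r + 2)" "i \<le> n-1" "j \<le> n-1" "\<bar>i - j\<bar> = 1"
    and c: "(c, r) \<in> V" "fold_col c = i"
    and c': "(c', r + 2) \<in> V" "(c', r + 2 - col_step c') \<in> V" "fold_col c' = j"
    using assms unfolding adjacent_residue_arrows_def Ibar_iff Ibar_e_iff by blast
  have "c \<noteq> n" "c' \<noteq> n" using c(2) c'(3) ij fold_col_eq_centre by auto
  moreover obtain p where "r = 2*p" using c(1) \<open>c \<noteq> n\<close> UpsV_off_centre_even by blast
  moreover have "\<bar>c - c'\<bar> = 1" using fold_col_adjacent_lift[of c c' p] calculation c c' ij by auto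
  ultimately show ?thesis using that c c' ij unfolding col_step_def by auto
qed

lemma adjacent_residue_arrows_subset: "adjacent_residue_arrows \<subseteq> Bquiver_rel n vs"
proof (rule subrelI)
  fix u v assume "(u, v) \<in> adjacent_residue_arrows"
  then obtain c c' p where "u = (fold_col c, 2*p)" "v = (fold_col c', 2*p + 2)" "c \<noteq> n" "c' \<noteq> n"
    "\<bar>c - c'\<bar> = 1" "(c, 2*p) \<in> V" "(c', 2*p + 2) \<in> V" "(c', 2*p - 2) \<in> V"
    by (rule adjacent_residue_arrow_lift)
  moreover from this have "B_arrow (c, 2*p) (c', 2*p + 2)" unfolding B_arrow_def by auto
  ultimately show "(u, v) \<in> Bquiver_rel n vs" using B_arrow_in_Bquiver_rel by blast
qed

lemma arrows_into_n_subset: "arrows_into_n \<subseteq> Bquiver_rel n vs"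
proof
  fix x assume "x \<in> arrows_into_n"
  then obtain r c where x: "x = ((n-1, r), (n, r + 1))" and c: "(c, r) \<in> V" "c = n-1 \<or> c = n+1"
    and n: "(n, r + 1) \<in> V" "(n, r - 1) \<in> V"
    unfolding arrows_into_n_def Ibar_iff Ibar_e_iff fold_col_eq_side fold_col_eq_centre col_step_def
    by auto
  then have "B_arrow (c, r) (n, r + 1)" unfolding B_arrow_def by auto
  moreover have "fold_col c = n-1" using c(2) fold_col_eq_side by blast
  ultimately show "x \<in> Bquiver_rel n vs" using B_arrow_in_Bquiver_rel[OF c(1) n(1)] x by simp
qed

lemma arrows_out_of_n_subset: "arrows_out_of_n \<subseteq> Bquiver_rel n vs"
proof
  fix x assume "x \<in> arrows_out_of_n"
  then obtain r c' where x: "x = ((n, r), (n-1, r + 3))" and n: "(n, r) \<in> V"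
    and c': "(c', r + 3) \<in> V" "(c', r - 1) \<in> V" "c' = n-1 \<or> c' = n+1"
    unfolding arrows_out_of_n_def Ibar_iff Ibar_e_iff fold_col_eq_side fold_col_eq_centre col_step_def
    by auto
  then have "B_arrow (n, r) (c', r + 3)" unfolding B_arrow_def by auto
  moreover have "fold_col c' = n-1" using c'(3) fold_col_eq_side by blast
  ultimately show "x \<in> Bquiver_rel n vs" using B_arrow_in_Bquiver_rel[OF n c'(1)] x by simp
qed

lemma Bquiver_rel_eq_families:
  "Bquiver_rel n vs = same_residue_arrows \<union> adjacent_residue_arrows \<union> arrows_into_n \<union> arrows_out_of_n"
proof
  show "Bquiver_rel n vs \<subseteq> same_residue_arrows \<union> adjacent_residue_arrows \<union> arrows_into_n \<union> arrows_out_of_n"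
    unfolding Bquiver_rel_B_arrow using B_arrow_folded_cases by blast
qed (use same_residue_arrows_subset adjacent_residue_arrows_subset arrows_into_n_subset
      arrows_out_of_n_subset in blast)

definition short_arrows_from_n :: "((int \<times> int) \<times> (int \<times> int)) set" where
  "short_arrows_from_n = {((n, r), (n-1, r + 1)) | r. True}"

definition frozen_pairs :: "((int \<times> int) \<times> (int \<times> int)) set" where
  "frozen_pairs = {(u, v). u \<in> Ibar_f n vs \<and> v \<in> Ibar_f n vs}"

lemma frozen_pairI:
  "(c, s) \<in> V \<Longrightarrow> (c, s - col_step c) \<notin> V \<Longrightarrow> (c', s') \<in> V \<Longrightarrow> (c', s' - col_step c') \<notin> V \<Longrightarrow>
     ((fold_col c, s), (fold_col c', s')) \<in> frozen_pairs"
  unfolding frozen_pairs_def by (simp add: Ibar_f_iff) blast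

lemma relabel_Gamma_arrow_off_centre:
  assumes G: "((j, p-1), (i, p)) \<in> Gamma_arrows n \<xi>" and off: "{i, j} \<noteq> {n-1, n}"
  shows "(relabel n (phiD n (j, p-1)), relabel n (phiD n (i, p))) \<in> adjacent_residue_arrows \<union> frozen_pairs"
proof -
  define cj ci where "cj = fst (phiD n (j, p-1))" and "ci = fst (phiD n (i, p))"
  have I: "(j, p-1) \<in> Ihat n \<xi>" "(i, p) \<in> Ihat n \<xi>" "\<bar>i - j\<bar> = 1"
    using G unfolding Gamma_arrows_iff by auto
  then have same_side: "(i \<le> n-1 \<and> j \<le> n-1) \<or> (n \<le> i \<and> n \<le> j)" using off by auto
  have cols: "cj \<noteq> n" "ci \<noteq> n" "unphi cj = j" "unphi ci = i" "\<bar>cj - ci\<bar> = 1"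
    using phiD_components[of j "p-1"] phiD_components[of i p] same_side I(3) unfolding cj_def ci_def phiD_def
      by auto
  have phi: "phiD n (j, p-1) = (cj, 2*(p-1))" "phiD n (i, p) = (ci, 2*p)"
    unfolding cj_def ci_def using phiD_components by (metis prod.collapse)+
  have V: "(cj, 2*(p-1)) \<in> V" "(ci, 2*p) \<in> V" using phiD_in_UpsV I phi by metis+
  show ?thesis
  proof (cases "(ci, 2*(p-2)) \<in> V")
    case True
    then have "(fold_col ci, 2*(p-1) + 2) \<in> Ibar_e n vs"
      using V(2) cols unfolding Ibar_e_iff col_step_def
        by (intro exI[of _ ci]) (auto simp: algebra_simps)
    moreover have "(fold_col cj, 2*(p-1)) \<in> Ibar n \<xi> fl" using V(1) unfolding Ibar_iff by auto
    ultimately have "((fold_col cj, 2*(p-1)), (fold_col ci, 2*(p-1) + 2)) \<in> adjacent_residue_arrows"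
      using fold_col_adjacent[OF cols(1,2,5)] unfolding adjacent_residue_arrows_def by blast
    then show ?thesis unfolding phi relabel_pair by (simp add: algebra_simps)
  next
    case False
    then have "(i, p-2) \<notin> Ihat n \<xi>" using UpsV_even_iff[OF cols(2), of "p-2"] cols(4) by simp
    then have "(j, p-3) \<notin> Ihat n \<xi>"
      using Ihat_bottom_adjacent[OF I(2) _ _ I(3)] I(1) by (simp add: algebra_simps)
    then have "(cj, 2*(p-1) - col_step cj) \<notin> V"
      using UpsV_even_iff[OF cols(1), of "p-3"] cols(1,3) unfolding col_step_def
        by (simp add: algebra_simps)
    moreover have "(ci, 2*p - col_step ci) \<notin> V"
      using False cols(2) unfolding col_step_def by (simp add: algebra_simps)
    ultimately show ?thesis using frozen_pairI V unfolding phi relabel_pair by blast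
  qed
qed

lemma relabel_Gamma_arrow_into_centre:
  assumes G: "((j, p-1), (i, p)) \<in> Gamma_arrows n \<xi>" and central: "{i, j} = {n-1, n}"
  shows "(relabel n (phiD n (j, p-1)), relabel n (n, 2*p - 1)) \<in> arrows_into_n \<union> frozen_pairs"
proof -
  define cj where "cj = fst (phiD n (j, p-1))"
  have I: "(j, p-1) \<in> Ihat n \<xi>" using G unfolding Gamma_arrows_iff by auto
  have j: "j = n-1 \<or> j = n" using central by (metis doubleton_eq_iff)
  have cj: "cj \<noteq> n" "unphi cj = j" "fold_col cj = n-1"
    using phiD_components[of j "p-1"] phiD_central_col[OF j] fold_col_eq_side unfolding cj_def by auto
  have phi: "phiD n (j, p-1) = (cj, 2*(p-1))" unfolding cj_def
    using phiD_components by (metis prod.collapse)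
  have Vj: "(cj, 2*(p-1)) \<in> V" using phiD_in_UpsV I phi by metis
  have "rm n \<xi> + 1 \<le> p \<and> p \<le> rM n \<xi>" using central_Gamma_arrow_iff G central by blast
  then have Vn: "(n, 2*p - 1) \<in> V" unfolding UpsV_centre_iff extra_shift_def by auto
  show ?thesis
  proof (cases "(n, 2*p - 3) \<in> V")
    case True
    then have "(n, 2*(p-1) + 1) \<in> Ibar_e n vs"
      using Vn unfolding Ibar_e_iff col_step_def by (intro exI[of _ n]) (auto simp: algebra_simps)
    moreover have "(n-1, 2*(p-1)) \<in> Ibar n \<xi> fl" using Vj cj unfolding Ibar_iff by auto
    ultimately have "((n-1, 2*(p-1)), (n, 2*(p-1) + 1)) \<in> arrows_into_n" unfolding arrows_into_n_def
      by blast
    then show ?thesis unfolding phi relabel_pair cj by (simp add: algebra_simps)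
  next
    case False
    then have "2*p - 1 = 2 * rm n \<xi> + extra_shift"
      using centre_bottom[OF Vn] by (simp add: algebra_simps)
    then have "p - 3 < rm n \<xi>" unfolding extra_shift_def by (auto split: if_splits)
    then have "(j, p-3) \<notin> Ihat n \<xi>" using central_Ihat_iff[of "p-3"] j by auto
    then have "(cj, 2*(p-1) - col_step cj) \<notin> V"
      using UpsV_even_iff[OF cj(1), of "p-3"] cj unfolding col_step_def by (simp add: algebra_simps)
    moreover have "(n, 2*p - 1 - col_step n) \<notin> V"
      using False unfolding col_step_def by (simp add: algebra_simps)
    ultimately show ?thesis
      using frozen_pairI[OF Vj _ Vn] unfolding phi relabel_pair by auto
  qed
qed

lemma relabel_UpsA_subset:
  "map_prod (relabel n) (relabel n) ` UpsA n \<xi> fl \<subseteq>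
     adjacent_residue_arrows \<union> arrows_into_n \<union> short_arrows_from_n \<union> frozen_pairs"
proof
  fix x assume "x \<in> map_prod (relabel n) (relabel n) ` UpsA n \<xi> fl"
  then obtain a b where ab: "(a, b) \<in> UpsA n \<xi> fl" "x = (relabel n a, relabel n b)" by auto
  from ab(1) show "x \<in> adjacent_residue_arrows \<union> arrows_into_n \<union> short_arrows_from_n \<union> frozen_pairs"
  proof (cases rule: UpsA_cases)
    case (off_centre i j p)
    then show ?thesis using relabel_Gamma_arrow_off_centre ab(2) by blast
  next
    case (into_centre i j p)
    then show ?thesis using relabel_Gamma_arrow_into_centre ab(2) by blast
  next
    case (out_of_centre i j p)
    then have "i = n-1 \<or> i = n" by (metis doubleton_eq_iff)
    then have "relabel n b = (n-1, 2*p)"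
      using out_of_centre(2) phiD_central_col[of i p] phiD_components[of i p] fold_col_eq_side
      by (metis prod.collapse relabel_pair)
    then have "x \<in> short_arrows_from_n"
      using ab(2) out_of_centre(1) unfolding short_arrows_from_n_def by (simp add: relabel_pair)
    then show ?thesis by blast
  next
    case extra_Gt
    then have "(n, 2 * rM n \<xi> + 1) \<in> V" "(n, 2 * rM n \<xi> - 1) \<in> V"
      using rm_less_rM unfolding UpsV_centre_iff extra_shift_def by auto
    then have "(n, 2 * rM n \<xi> + 1) \<in> Ibar_e n vs"
      unfolding Ibar_e_iff col_step_def by (intro exI[of _ n]) auto
    moreover have "a \<in> V" using extra_Gt(3) unfolding UpsV_def by blast
    then have "(n-1, 2 * rM n \<xi>) \<in> Ibar n \<xi> fl" "relabel n a = (n-1, 2 * rM n \<xi>)"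
      using extra_Gt(4,5) fold_col_eq_side unfolding Ibar_iff
        by (metis insert_iff singletonD prod.collapse relabel_pair)+
    ultimately have "x \<in> arrows_into_n"
      using ab(2) extra_Gt(2) unfolding arrows_into_n_def by (simp add: relabel_pair)
    then show ?thesis by blast
  next
    case extra_Lt
    then have "relabel n b = (n-1, 2 * rm n \<xi>)"
      using fold_col_eq_side by (metis insert_iff singletonD prod.collapse relabel_pair)
    then have "x \<in> short_arrows_from_n"
      using ab(2) extra_Lt(2) unfolding short_arrows_from_n_def by (simp add: relabel_pair)
    then show ?thesis by blast
  qed
qed

lemma adjacent_residue_arrows_subset_UpsA:
  "adjacent_residue_arrows \<subseteq> map_prod (relabel n) (relabel n) ` UpsA n \<xi> fl"
proof (rule subrelI)
  fix u v assume "(u, v) \<in> adjacent_residue_arrows"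
  then obtain c c' p where uv: "u = (fold_col c, 2*p)" "v = (fold_col c', 2*p + 2)"
    and cols: "c \<noteq> n" "c' \<noteq> n" "\<bar>c - c'\<bar> = 1" and V: "(c, 2*p) \<in> V" "(c', 2*(p+1)) \<in> V"
    by (rule adjacent_residue_arrow_lift) (auto simp: algebra_simps)
  have same_side: "(c \<le> n-1 \<and> c' \<le> n-1) \<or> (n+1 \<le> c \<and> n+1 \<le> c')" using cols by auto
  have "\<bar>unphi c' - unphi c\<bar> = 1" "{unphi c', unphi c} \<noteq> {n-1, n}"
    using same_side cols(3) unfolding unphi_def by (auto simp: doubleton_eq_iff)
  then have "((unphi c, p+1-1), (unphi c', p+1)) \<in> Gamma_arrows n \<xi> \<and> {unphi c', unphi c} \<noteq> {n-1, n}"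
    using V UpsV_even_iff[OF cols(1), of p] UpsV_even_iff[OF cols(2), of "p+1"]
    unfolding Gamma_arrows_iff by simp
  then have "(phiD n (unphi c, p+1-1), phiD n (unphi c', p+1)) \<in> UpsA n \<xi> fl"
    unfolding UpsA_def by blast
  moreover have "(relabel n (phiD n (unphi c, p+1-1)), relabel n (phiD n (unphi c', p+1))) = (u, v)"
    using uv cols phiD_unphi by (simp add: relabel_pair algebra_simps)
  ultimately show "(u, v) \<in> map_prod (relabel n) (relabel n) ` UpsA n \<xi> fl"
    by (metis image_eqI map_prod_simp)
qed

lemma arrows_into_n_subset_UpsA: "arrows_into_n \<subseteq> map_prod (relabel n) (relabel n) ` UpsA n \<xi> fl"
proof
  fix x assume "x \<in> arrows_into_n"
  then obtain r c where x: "x = ((n-1, r), (n, r + 1))" and c: "(c, r) \<in> V" "c = n-1 \<or> c = n+1"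
    and Vn: "(n, r + 1) \<in> V"
    unfolding arrows_into_n_def Ibar_iff Ibar_e_iff fold_col_eq_side fold_col_eq_centre by auto
  have "c \<noteq> n" using c(2) by auto
  then obtain q where q: "r = 2*q" "(unphi c, q) \<in> Ihat n \<xi>" using c(1) UpsV_off_centre_even by blast
  have central: "unphi c = n-1 \<or> unphi c = n" using c(2) unfolding unphi_def by auto
  then have "(n-1, q) \<in> Ihat n \<xi> \<or> (n, q) \<in> Ihat n \<xi>" using q(2) by auto
  then have "rm n \<xi> \<le> q \<and> q \<le> rM n \<xi>" by (simp only: central_Ihat_iff)
  have phi: "phiD n (unphi c, q) = (c, r)" using phiD_unphi[OF \<open>c \<noteq> n\<close>] q by simp
  have rel: "map_prod (relabel n) (relabel n) ((c, r), (n, 2*(q+1) - 1)) = x"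
    using x c(2) q fold_col_eq_side by (simp add: relabel_pair algebra_simps)
  show "x \<in> map_prod (relabel n) (relabel n) ` UpsA n \<xi> fl"
  proof (cases "fl = Gt \<and> q = rM n \<xi>")
    case True
    then have "((c, r), (n, 2*(q+1) - 1)) \<in> UpsA n \<xi> fl"
      using phi q c(2) unfolding UpsA_def by (auto intro!: image_eqI[of _ "phiD n" "(unphi c, q)"])
    then show ?thesis using rel by (metis image_eqI)
  next
    case False
    have "q \<noteq> rM n \<xi>"
    proof
      assume "q = rM n \<xi>"
      with False have "fl = Lt" by (cases fl) auto
      then show False using Vn \<open>q = rM n \<xi>\<close> q(1) unfolding UpsV_centre_iff extra_shift_def by auto
    qed
    with \<open>rm n \<xi> \<le> q \<and> q \<le> rM n \<xi>\<close> obtain i j where G: "((j, q+1-1), (i, q+1)) \<in> Gamma_arrows n \<xi>"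
      "{i, j} = {n-1, n}"
      using central_Gamma_arrow_iff[of "q+1"] by auto
    then have "(j, q) \<in> Ihat n \<xi>" "j = n-1 \<or> j = n"
      unfolding Gamma_arrows_iff by (auto simp: doubleton_eq_iff)
    then have "j = unphi c" using central q(2) Ihat_parity[of j q "unphi c" q] by auto
    then have "(phiD n (j, q+1-1), (n, 2*(q+1) - 1)) \<in> UpsA n \<xi> fl" using G unfolding UpsA_def by blast
    then show ?thesis using rel phi \<open>j = unphi c\<close> by (metis add_diff_cancel_right' image_eqI)
  qed
qed

lemma Bquiver_rel_no_frozen_pair: "x \<in> Bquiver_rel n vs \<Longrightarrow> x \<notin> frozen_pairs"
proof -
  assume "x \<in> Bquiver_rel n vs"
  then obtain c s c' s' where x: "x = ((fold_col c, s), (fold_col c', s'))"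
    and V: "(c, s) \<in> V" "(c', s') \<in> V" and arrow: "B_arrow (c, s) (c', s')"
    unfolding Bquiver_rel_B_arrow by blast
  have "(c, s - col_step c) \<in> V \<or> (c', s' - col_step c') \<in> V"
    using arrow V unfolding B_arrow_def col_step_def by (auto simp: algebra_simps)
  then have "(fold_col c, s) \<in> Ibar_e n vs \<or> (fold_col c', s') \<in> Ibar_e n vs"
    using V unfolding Ibar_e_iff by blast
  then show "x \<notin> frozen_pairs" using x Ibar_e_not_f unfolding frozen_pairs_def by auto
qed

lemma families_disjoint_short_arrows_from_n:
  "(same_residue_arrows \<union> adjacent_residue_arrows \<union> arrows_into_n) \<inter> short_arrows_from_n = {}"
  unfolding same_residue_arrows_def adjacent_residue_arrows_def arrows_into_n_def short_arrows_from_n_def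
  by auto

lemma Bquiver_rel_eq_modified_Upsilon:
  "Bquiver_rel n vs =
     ((map_prod (relabel n) (relabel n) ` UpsA n \<xi> fl \<union> same_residue_arrows) - short_arrows_from_n
       \<union> arrows_out_of_n) - frozen_pairs"
proof -
  let ?A = "map_prod (relabel n) (relabel n) ` UpsA n \<xi> fl"
  have "?A - short_arrows_from_n - frozen_pairs \<subseteq> adjacent_residue_arrows \<union> arrows_into_n"
    using relabel_UpsA_subset by blast
  moreover have "adjacent_residue_arrows \<union> arrows_into_n \<subseteq> ?A"
    using adjacent_residue_arrows_subset_UpsA arrows_into_n_subset_UpsA by blast
  moreover note families_disjoint_short_arrows_from_n Bquiver_rel_eq_families Bquiver_rel_no_frozen_pair
  ultimately show ?thesis by blast
qed

end

theorem proposition6p1: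
  fixes n :: int and Q :: "(int \<times> int) set" and \<xi> :: "int \<Rightarrow> int"
    and fl :: flat and vs :: "(int \<times> int) list"
  assumes n2: "n \<ge> 2"
    and Q_A: "\<forall>(i,j) \<in> Q. 1 \<le> i \<and> i \<le> 2*n-2 \<and> 1 \<le> j \<and> j \<le> 2*n-2 \<and> \<bar>i - j\<bar> = 1"
    and Q_edges: "\<forall>i. 1 \<le> i \<and> i < 2*n-2 \<longrightarrow>
                     ((i, i+1) \<in> Q \<or> (i+1, i) \<in> Q) \<and> \<not> ((i, i+1) \<in> Q \<and> (i+1, i) \<in> Q)"
    and height: "\<forall>(i,j) \<in> Q. \<xi> j = \<xi> i + 1"
    and vs_dist: "distinct vs"
    and vs_set: "set vs = UpsV n \<xi> fl"
    and vs_sorted: "sorted_wrt (\<lambda>u v. snd u \<ge> snd v) vs"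
  shows
    "Bquiver_rel n vs =
       ((map_prod (relabel n) (relabel n) ` UpsA n \<xi> fl
          \<union> {((i,r),(i, r - 2 * rr n i)) | i r. (i,r) \<in> Ibar n \<xi> fl \<and> (i, r - 2 * rr n i) \<in> Ibar n \<xi> fl})
        - {((n,r),(n-1,r+1)) | r. True}
        \<union> {((n,r),(n-1,r+3)) | r. (n,r) \<in> Ibar n \<xi> fl \<and> (n-1,r+3) \<in> Ibar_e n vs})
       - {(u,v). u \<in> Ibar_f n vs \<and> v \<in> Ibar_f n vs}
     \<and> Bquiver_rel n vs =
         {((i,r),(i, r - 2 * rr n i)) | i r. (i,r) \<in> Ibar n \<xi> fl \<and> (i, r - 2 * rr n i) \<in> Ibar n \<xi> fl}
       \<union> {((i,r),(j,r+2)) | i j r. i \<le> n-1 \<and> j \<le> n-1 \<and> \<bar>i - j\<bar> = 1 \<and>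
             (i,r) \<in> Ibar n \<xi> fl \<and> (j,r+2) \<in> Ibar_e n vs}
       \<union> {((n-1,r),(n,r+1)) | r. (n-1,r) \<in> Ibar n \<xi> fl \<and> (n,r+1) \<in> Ibar_e n vs}
       \<union> {((n,r),(n-1,r+3)) | r. (n,r) \<in> Ibar n \<xi> fl \<and> (n-1,r+3) \<in> Ibar_e n vs}"
proof -
  have height_step: "\<bar>\<xi> (i+1) - \<xi> i\<bar> = 1" if "1 \<le> i" "i < 2*n-2" for i
  proof -
    have "(i, i+1) \<in> Q \<or> (i+1, i) \<in> Q" using Q_edges that by blast
    then show ?thesis using height by auto
  qed
  interpret twisted_AR_word n \<xi> fl vs
    using n2 height_step vs_dist vs_set vs_sorted by unfold_locales auto
  show ?thesis
    using Bquiver_rel_eq_modified_Upsilon Bquiver_rel_eq_families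
    unfolding same_residue_arrows_def adjacent_residue_arrows_def arrows_into_n_def
      arrows_out_of_n_def short_arrows_from_n_def frozen_pairs_def
    by blast
qed

end
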